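(* Fix $t>0$. The transformation $\mathcal{T}$ on $C([0,t];\mathbb{R})$ has the following properties. (i) For every $\phi\in C([0,t];\mathbb{R})$, $\mathcal{T}(\phi)(t)=-\phi_t$. (ii) For every $\phi\in C([0,t];\mathbb{R})$, \[\frac{1}{A_s(\mathcal{T}(\phi))}=\frac{1}{A_s(\phi)}+\frac{e^{2\phi_t}-1}{A_t(\phi)},\quad 0<s\le t;\] in particular $A_t(\mathcal{T}(\phi))=e^{-2\phi_t}A_t(\phi)$. (iii) $Z_s(\mathcal{T}(\phi))=Z_s(\phi)$ for all $0\le s\le t$ and all $\phi$, i.e. $Z\circ\mathcal{T}=Z$. (iv) For every $z\in\mathbb{R}$, $\mathcal{T}\circ\mathbb{T}_z\circ\mathcal{T}\circ\mathbb{T}_z=\mathrm{Id}$; in particular $\mathcal{T}\circ\mathcal{T}=\mathrm{Id}$. Moreover $(\mathcal{T}\circ\mathbb{T}_z)(\phi)=\mathbb{T}_{2\phi_t-z}(\phi)$ for all $\phi\in C([0,t];\mathbb{R})$ and $z\in\mathbb{R}$. (v) For every $\phi\in C([0,t];\mathbb{R})$ with $\phi_0=0$, $(R\circ\mathcal{T})(\phi)=(\mathcal{T}\circ R)(\phi)$.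
   Context: For $\phi\in C([0,t];\mathbb{R})$ let $A_s(\phi)=\int_0^s e^{2\phi_u}\,du$ and $Z_s(\phi)=e^{-\phi_s}A_s(\phi)$. For $z\in\mathbb{R}$, $\mathbb{T}_z(\phi)(s)=\phi_s-\log\{1+\frac{A_s(\phi)}{A_t(\phi)}(e^z-1)\}$, $0\le s\le t$; $\mathcal{T}(\phi)(s)=\mathbb{T}_{2\phi_t}(\phi)(s)$; $R(\phi)(s)=\phi_{t-s}-\phi_t$, $0\le s\le t$ (time reversal); $\mathrm{Id}$ is the identity map on $C([0,t];\mathbb{R})$. *)

theory Defs
  imports "HOL-Analysis.Analysis"
begin

text \<open>Paths phi in C([0,t];R) are represented as functions real => real that are
continuous on {0..t}; only their values on [0,t] matter.\<close>

definition Aint :: "(real \<Rightarrow> real) \<Rightarrow> real \<Rightarrow> real" where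
  "Aint phi s = integral {0..s} (\<lambda>u. exp (2 * phi u))"

definition Zf :: "(real \<Rightarrow> real) \<Rightarrow> real \<Rightarrow> real" where
  "Zf phi s = exp (- phi s) * Aint phi s"

definition TTz :: "real \<Rightarrow> real \<Rightarrow> (real \<Rightarrow> real) \<Rightarrow> (real \<Rightarrow> real)" where
  "TTz t z phi = (\<lambda>s. phi s - ln (1 + Aint phi s / Aint phi t * (exp z - 1)))"

definition Tcal :: "real \<Rightarrow> (real \<Rightarrow> real) \<Rightarrow> (real \<Rightarrow> real)" where
  "Tcal t phi = TTz t (2 * phi t) phi"

definition Rrev :: "real \<Rightarrow> (real \<Rightarrow> real) \<Rightarrow> (real \<Rightarrow> real)" where
  "Rrev t phi = (\<lambda>s. phi (t - s) - phi t)"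

end

theory Submission imports Defs begin

text \<open>Write r(s) = A_s(phi) / A_t(phi), a number in [0,1]. The map T_z divides A_s by
  1 + r(s) (e^z - 1) and lowers the endpoint value by z; on the log-odds of r(s) it is just
  the shift by z. Hence T_w o T_z = T_(z+w), and as the transformation T equals T_(2 phi_t),
  this gives T o T_z = T_(2 phi_t - z) and all the involution properties. Z is invariant
  because the factor dividing A_s is the one multiplying e^(-phi_s). Time reversal gives
  A_s(R phi) = e^(-2 phi_t) (A_t(phi) - A_(t-s)(phi)), i.e. it replaces r(s) by 1 - r(t - s),
  which commutes with the action of T once (R phi)_t = -phi_t, i.e. once phi_0 = 0.\<close>

lemma integral_eq_antiderivative:
  assumes "\<And>x. x \<in> {a..b} \<Longrightarrow> (G has_real_derivative g x) (at x within {a..b})"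
    and "s \<in> {a..b}"
  shows "integral {a..s} g = G s - G a"
proof -
  have "(g has_integral (G s - G a)) {a..s}"
  proof (rule fundamental_theorem_of_calculus)
    show "a \<le> s" using assms(2) by simp
    fix x assume x: "x \<in> {a..s}"
    have "{a..s} \<subseteq> {a..b}" "x \<in> {a..b}"
      using x assms(2) by auto
    then have "(G has_real_derivative g x) (at x within {a..s})"
      using assms(1) DERIV_subset by blast
    then show "(G has_vector_derivative g x) (at x within {a..s})"
      by (simp add: has_real_derivative_iff_has_vector_derivative)
  qed
  then show ?thesis by (rule integral_unique)
qed

lemma one_plus_mult_exp_minus_one_pos:
  fixes r z :: real
  assumes "0 \<le> r" "r \<le> 1"
  shows "0 < 1 + r * (exp z - 1)"
proof (cases "r = 0")
  case False
  then have "0 < r * exp z"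
    using assms by simp
  then show ?thesis
    using assms by (simp add: algebra_simps)
qed simp

lemma Aint_0 [simp]: "Aint phi 0 = 0"
  by (simp add: Aint_def)

lemma has_real_derivative_Aint:
  assumes "continuous_on {0..t} phi" "x \<in> {0..t}"
  shows "(Aint phi has_real_derivative exp (2 * phi x)) (at x within {0..t})"
proof -
  have "continuous_on {0..t} (\<lambda>u. exp (2 * phi u))"
    by (intro continuous_intros assms)
  from integral_has_vector_derivative[OF this assms(2)] show ?thesis
    unfolding has_real_derivative_iff_has_vector_derivative Aint_def[abs_def] by simp
qed

lemma continuous_on_Aint:
  assumes "continuous_on {0..t} phi"
  shows "continuous_on {0..t} (Aint phi)"
  using has_real_derivative_Aint[OF assms] DERIV_continuous
  unfolding continuous_on_eq_continuous_within by blast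

lemma Aint_less:
  assumes "continuous_on {0..t} phi" "0 \<le> a" "a < b" "b \<le> t"
  shows "Aint phi a < Aint phi b"
proof -
  have "\<exists>x\<in>{a<..<b}. Aint phi b - Aint phi a = exp (2 * phi x) * (b - a)"
  proof (rule mvt_simple[OF assms(3)])
    fix x assume "a \<le> x" "x \<le> b"
    then have "(Aint phi has_real_derivative exp (2 * phi x)) (at x within {a..b})"
      using assms by (intro DERIV_subset[OF has_real_derivative_Aint[OF assms(1)]]) auto
    then show "(Aint phi has_derivative (\<lambda>h. exp (2 * phi x) * h)) (at x within {a..b})"
      by (simp add: has_field_derivative_def)
  qed
  then obtain x where "Aint phi b - Aint phi a = exp (2 * phi x) * (b - a)"
    by blast
  moreover have "0 < exp (2 * phi x) * (b - a)"
    using assms(3) by simp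
  ultimately show ?thesis
    by simp
qed

lemma Aint_pos:
  assumes "continuous_on {0..t} phi" "s \<in> {0<..t}"
  shows "0 < Aint phi s"
  using Aint_less[OF assms(1), of 0 s] assms(2) by simp

lemma Aint_ratio_bounds:
  assumes "continuous_on {0..t} phi" "t > 0" "s \<in> {0..t}"
  shows "0 \<le> Aint phi s / Aint phi t" "Aint phi s / Aint phi t \<le> 1"
proof -
  have "0 \<le> Aint phi s" "Aint phi s \<le> Aint phi t"
    using Aint_less[OF assms(1), of 0 s] Aint_less[OF assms(1), of s t] assms
    by (cases "s = 0"; cases "s = t"; simp)+
  moreover have "0 < Aint phi t"
    using Aint_pos[OF assms(1), of t] assms(2) by simp
  ultimately show "0 \<le> Aint phi s / Aint phi t" "Aint phi s / Aint phi t \<le> 1"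
    by simp_all
qed

lemma TTz_denominator_pos:
  assumes "continuous_on {0..t} phi" "t > 0" "s \<in> {0..t}"
  shows "0 < 1 + Aint phi s / Aint phi t * (exp z - 1)"
  using one_plus_mult_exp_minus_one_pos Aint_ratio_bounds[OF assms] by blast

lemma Aint_cong:
  assumes "\<forall>x\<in>{0..t}. f x = g x" "s \<in> {0..t}"
  shows "Aint f s = Aint g s"
  unfolding Aint_def using assms by (intro integral_cong) auto

lemma TTz_cong:
  assumes "\<forall>x\<in>{0..t}. f x = g x" "s \<in> {0..t}"
  shows "TTz t z f s = TTz t z g s"
  using Aint_cong[OF assms(1), of s] Aint_cong[OF assms(1), of t] assms
  by (simp add: TTz_def)

lemma TTz_0 [simp]: "TTz t 0 phi = phi"
  by (simp add: TTz_def)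

lemma TTz_at_endpoint:
  assumes "continuous_on {0..t} phi" "t > 0"
  shows "TTz t z phi t = phi t - z"
  using Aint_pos[OF assms(1), of t] assms(2) by (simp add: TTz_def)

lemma continuous_on_TTz:
  assumes "continuous_on {0..t} phi" "t > 0"
  shows "continuous_on {0..t} (TTz t z phi)"
proof -
  have "Aint phi t \<noteq> 0"
    using Aint_pos[OF assms(1), of t] assms(2) by simp
  moreover have "\<forall>s\<in>{0..t}. 1 + Aint phi s / Aint phi t * (exp z - 1) \<noteq> 0"
    using TTz_denominator_pos[OF assms] by (metis less_irrefl)
  ultimately show ?thesis
    unfolding TTz_def by (intro continuous_intros continuous_on_Aint assms) auto
qed

lemma Aint_TTz:
  assumes "continuous_on {0..t} phi" "t > 0" "s \<in> {0..t}"
  shows "Aint (TTz t z phi) s = Aint phi s / (1 + Aint phi s / Aint phi t * (exp z - 1))"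
proof -
  define D where "D x = 1 + Aint phi x / Aint phi t * (exp z - 1)" for x
  have D_pos: "0 < D x" if "x \<in> {0..t}" for x
    using TTz_denominator_pos[OF assms(1,2) that] by (simp add: D_def)
  have "0 < Aint phi t"
    using Aint_pos[OF assms(1), of t] assms(2) by simp
  have "integral {0..s} (\<lambda>u. exp (2 * TTz t z phi u)) = Aint phi s / D s - Aint phi 0 / D 0"
  proof (rule integral_eq_antiderivative[OF _ assms(3)])
    fix x assume x: "x \<in> {0..t}"
    have "((\<lambda>x. Aint phi x / D x) has_real_derivative
        (exp (2 * phi x) * D x - Aint phi x * (exp (2 * phi x) / Aint phi t * (exp z - 1))) / (D x)\<^sup>2)
        (at x within {0..t})"
      unfolding D_def using D_pos[OF x] \<open>0 < Aint phi t\<close>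
      by (auto intro!: derivative_eq_intros has_real_derivative_Aint[OF assms(1) x]
          simp: D_def power2_eq_square)
    also have "(exp (2 * phi x) * D x - Aint phi x * (exp (2 * phi x) / Aint phi t * (exp z - 1))) / (D x)\<^sup>2
        = exp (2 * phi x) / (D x)\<^sup>2"
      using \<open>0 < Aint phi t\<close> by (simp add: D_def field_simps)
    also have "\<dots> = exp (2 * TTz t z phi x)"
    proof -
      have "exp (2 * TTz t z phi x) = exp (phi x) ^ 2 / exp (ln (D x)) ^ 2"
        unfolding TTz_def D_def[symmetric]
        by (simp add: exp_diff power_divide exp_double[symmetric])
      then show ?thesis
        using D_pos[OF x] by (simp add: exp_double)
    qed
    finally show "((\<lambda>x. Aint phi x / D x) has_real_derivative exp (2 * TTz t z phi x))
        (at x within {0..t})" .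
  qed
  then show ?thesis
    by (simp add: Aint_def[of "TTz t z phi"] D_def)
qed

lemma inverse_Aint_TTz:
  assumes "continuous_on {0..t} phi" "s \<in> {0<..t}"
  shows "1 / Aint (TTz t z phi) s = 1 / Aint phi s + (exp z - 1) / Aint phi t"
proof -
  have "0 < t" "s \<in> {0..t}"
    using assms(2) by auto
  moreover have "0 < Aint phi s" "0 < Aint phi t"
    using Aint_pos[OF assms(1)] assms(2) by auto
  ultimately show ?thesis
    using TTz_denominator_pos[OF assms(1)]
    by (simp add: Aint_TTz[OF assms(1)] field_simps)
qed

lemma Aint_TTz_endpoint:
  assumes "continuous_on {0..t} phi" "t > 0"
  shows "Aint (TTz t z phi) t = exp (- z) * Aint phi t"
proof -
  have "0 < Aint phi t"
    using Aint_pos[OF assms(1), of t] assms(2) by simp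
  then show ?thesis
    using assms(2) by (simp add: Aint_TTz[OF assms] exp_minus field_simps)
qed

lemma TTz_TTz:
  assumes "continuous_on {0..t} phi" "t > 0" "s \<in> {0..t}"
  shows "TTz t w (TTz t z phi) s = TTz t (z + w) phi s"
proof -
  define r where "r = Aint phi s / Aint phi t"
  have "0 < Aint phi t"
    using Aint_pos[OF assms(1), of t] assms(2) by simp
  have D_pos: "0 < 1 + r * (exp u - 1)" for u
    using TTz_denominator_pos[OF assms] by (simp add: r_def)
  have As: "Aint (TTz t z phi) s = r * Aint phi t / (1 + r * (exp z - 1))"
    using \<open>0 < Aint phi t\<close> by (simp add: Aint_TTz[OF assms] r_def)
  have At: "Aint (TTz t z phi) t = Aint phi t / exp z"
    by (simp add: Aint_TTz_endpoint[OF assms(1,2)] exp_minus field_simps)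
  have ratio: "Aint (TTz t z phi) s / Aint (TTz t z phi) t = r * exp z / (1 + r * (exp z - 1))"
    unfolding As At using \<open>0 < Aint phi t\<close> D_pos[of z]
    by (simp add: divide_simps del: divide_const_simps)
  have "TTz t w (TTz t z phi) s
      = phi s - ln (1 + r * (exp z - 1)) - ln (1 + r * exp z / (1 + r * (exp z - 1)) * (exp w - 1))"
    unfolding TTz_def[of t w] ratio by (simp add: TTz_def r_def)
  also have "1 + r * exp z / (1 + r * (exp z - 1)) * (exp w - 1)
      = (1 + r * (exp (z + w) - 1)) / (1 + r * (exp z - 1))"
    using D_pos[of z] by (simp add: field_simps exp_add)
  also have "phi s - ln (1 + r * (exp z - 1)) - ln \<dots> = phi s - ln (1 + r * (exp (z + w) - 1))"
    using D_pos[of z] D_pos[of "z + w"] by (simp add: ln_div)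
  finally show ?thesis
    by (simp add: TTz_def r_def)
qed

lemma Zf_TTz:
  assumes "continuous_on {0..t} phi" "t > 0" "s \<in> {0..t}"
  shows "Zf (TTz t z phi) s = Zf phi s"
proof -
  define D where "D = 1 + Aint phi s / Aint phi t * (exp z - 1)"
  have "0 < D"
    using TTz_denominator_pos[OF assms] by (simp add: D_def)
  have "exp (- TTz t z phi s) = exp (- phi s) * exp (ln D)"
    by (simp add: TTz_def D_def exp_diff exp_minus field_simps)
  then show ?thesis
    unfolding Zf_def Aint_TTz[OF assms] D_def[symmetric] using \<open>0 < D\<close> by simp
qed

lemma Tcal_at_endpoint:
  assumes "continuous_on {0..t} phi" "t > 0"
  shows "Tcal t phi t = - phi t"
  by (simp add: Tcal_def TTz_at_endpoint[OF assms])

lemma Tcal_TTz: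
  assumes "continuous_on {0..t} phi" "t > 0" "s \<in> {0..t}"
  shows "Tcal t (TTz t z phi) s = TTz t (2 * phi t - z) phi s"
  using TTz_TTz[OF assms, of "2 * (phi t - z)" z]
  by (simp add: Tcal_def TTz_at_endpoint[OF assms(1,2)] algebra_simps)

lemma Tcal_Tcal:
  assumes "continuous_on {0..t} phi" "t > 0" "s \<in> {0..t}"
  shows "Tcal t (Tcal t phi) s = phi s"
  using Tcal_TTz[OF assms, of "2 * phi t"] by (simp add: Tcal_def[of t phi])

lemma Tcal_TTz_Tcal_TTz:
  assumes "continuous_on {0..t} phi" "t > 0" "s \<in> {0..t}"
  shows "Tcal t (TTz t z (Tcal t (TTz t z phi))) s = phi s"
proof -
  define chi where "chi = Tcal t (TTz t z phi)"
  have chi_cont: "continuous_on {0..t} chi"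
    unfolding chi_def Tcal_def by (intro continuous_on_TTz assms(1,2))
  have chi_eq: "\<forall>x\<in>{0..t}. chi x = TTz t (2 * phi t - z) phi x"
    using Tcal_TTz[OF assms(1,2)] by (simp add: chi_def)
  have "chi t = z - phi t"
    using chi_eq TTz_at_endpoint[OF assms(1,2)] assms(2) by simp
  have "Tcal t (TTz t z chi) s = TTz t (2 * chi t - z) chi s"
    by (rule Tcal_TTz[OF chi_cont assms(2,3)])
  also have "\<dots> = TTz t (2 * chi t - z) (TTz t (2 * phi t - z) phi) s"
    by (rule TTz_cong[OF chi_eq assms(3)])
  also have "\<dots> = TTz t 0 phi s"
    using TTz_TTz[OF assms, of "2 * chi t - z" "2 * phi t - z"] \<open>chi t = z - phi t\<close>
    by simp
  finally show ?thesis
    by (simp add: chi_def)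
qed

lemma Aint_Rrev:
  assumes "continuous_on {0..t} phi" "s \<in> {0..t}"
  shows "Aint (Rrev t phi) s = exp (- 2 * phi t) * (Aint phi t - Aint phi (t - s))"
proof -
  define G where "G x = exp (- 2 * phi t) * (Aint phi t - Aint phi (t - x))" for x
  have "integral {0..s} (\<lambda>u. exp (2 * Rrev t phi u)) = G s - G 0"
  proof (rule integral_eq_antiderivative[OF _ assms(2)])
    fix x assume x: "x \<in> {0..t}"
    have reflect: "(\<lambda>x. t - x) ` {0..t} = {0..t}"
      by (auto simp: image_iff intro!: bexI[where x="t - _"])
    have "(Aint phi has_real_derivative exp (2 * phi (t - x))) (at (t - x) within (\<lambda>x. t - x) ` {0..t})"
      unfolding reflect using has_real_derivative_Aint[OF assms(1)] x by auto
    moreover have "((\<lambda>x. t - x) has_real_derivative -1) (at x within {0..t})"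
      by (auto intro!: derivative_eq_intros)
    ultimately have "((\<lambda>x. Aint phi (t - x)) has_real_derivative - exp (2 * phi (t - x)))
        (at x within {0..t})"
      using DERIV_image_chain by (fastforce simp: o_def)
    then have "(G has_real_derivative exp (- 2 * phi t) * exp (2 * phi (t - x))) (at x within {0..t})"
      unfolding G_def by (auto intro!: derivative_eq_intros)
    then show "(G has_real_derivative exp (2 * Rrev t phi x)) (at x within {0..t})"
      by (simp add: Rrev_def exp_add[symmetric] algebra_simps)
  qed
  then show ?thesis
    by (simp add: Aint_def[of "Rrev t phi"] G_def)
qed

lemma Rrev_Tcal:
  assumes "continuous_on {0..t} phi" "t > 0" "phi 0 = 0" "s \<in> {0..t}"
  shows "Rrev t (Tcal t phi) s = Tcal t (Rrev t phi) s"
proof -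
  define r where "r = Aint phi (t - s) / Aint phi t"
  define E where "E = exp (2 * phi t)"
  have "0 < Aint phi t"
    using Aint_pos[OF assms(1), of t] assms(2) by simp
  have "t - s \<in> {0..t}"
    using assms(4) by auto
  have D_pos: "0 < 1 + r * (E - 1)"
    using TTz_denominator_pos[OF assms(1,2) \<open>t - s \<in> {0..t}\<close>] by (simp add: r_def E_def)
  have "Rrev t (Tcal t phi) s = phi (t - s) - ln (1 + r * (E - 1)) + phi t"
    unfolding Rrev_def Tcal_at_endpoint[OF assms(1,2)] by (simp add: Tcal_def TTz_def r_def E_def)
  moreover have "Tcal t (Rrev t phi) s = phi (t - s) - ln (1 + r * (E - 1)) + phi t"
  proof -
    have ratio: "Aint (Rrev t phi) s / Aint (Rrev t phi) t = 1 - r"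
      using \<open>0 < Aint phi t\<close> assms(2,4)
      by (simp add: Aint_Rrev[OF assms(1)] r_def field_simps)
    have endpoint: "exp (2 * Rrev t phi t) = 1 / E"
      using assms(3) by (simp add: Rrev_def E_def exp_minus inverse_eq_divide)
    have denominator: "1 + (1 - r) * (1 / E - 1) = (1 + r * (E - 1)) / E"
      by (simp add: E_def field_simps)
    show ?thesis
      unfolding Tcal_def TTz_def ratio endpoint denominator
      using D_pos by (simp add: ln_div Rrev_def E_def)
  qed
  ultimately show ?thesis
    by simp
qed

theorem proposition2p2:
  fixes t :: real
  assumes "t > 0"
  shows
    "(\<forall>phi. continuous_on {0..t} phi \<longrightarrow> Tcal t phi t = - phi t)
   \<and> (\<forall>phi. continuous_on {0..t} phi \<longrightarrow>
        (\<forall>s\<in>{0<..t}. 1 / Aint (Tcal t phi) s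
            = 1 / Aint phi s + (exp (2 * phi t) - 1) / Aint phi t)
        \<and> Aint (Tcal t phi) t = exp (- 2 * phi t) * Aint phi t)
   \<and> (\<forall>phi. continuous_on {0..t} phi \<longrightarrow>
        (\<forall>s\<in>{0..t}. Zf (Tcal t phi) s = Zf phi s))
   \<and> (\<forall>z phi. continuous_on {0..t} phi \<longrightarrow>
        (\<forall>s\<in>{0..t}. (Tcal t \<circ> TTz t z \<circ> Tcal t \<circ> TTz t z) phi s = phi s))
   \<and> (\<forall>phi. continuous_on {0..t} phi \<longrightarrow>
        (\<forall>s\<in>{0..t}. (Tcal t \<circ> Tcal t) phi s = phi s))
   \<and> (\<forall>z phi. continuous_on {0..t} phi \<longrightarrow>
        (\<forall>s\<in>{0..t}. (Tcal t \<circ> TTz t z) phi s = TTz t (2 * phi t - z) phi s))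
   \<and> (\<forall>phi. continuous_on {0..t} phi \<longrightarrow> phi 0 = 0 \<longrightarrow>
        (\<forall>s\<in>{0..t}. (Rrev t \<circ> Tcal t) phi s = (Tcal t \<circ> Rrev t) phi s))"
proof (intro conjI allI impI ballI)
  fix phi :: "real \<Rightarrow> real" assume "continuous_on {0..t} phi"
  then show "Tcal t phi t = - phi t"
    using Tcal_at_endpoint assms by blast
next
  fix phi :: "real \<Rightarrow> real" and s assume "continuous_on {0..t} phi" "s \<in> {0<..t}"
  then show "1 / Aint (Tcal t phi) s = 1 / Aint phi s + (exp (2 * phi t) - 1) / Aint phi t"
    unfolding Tcal_def by (rule inverse_Aint_TTz)
next
  fix phi :: "real \<Rightarrow> real" assume "continuous_on {0..t} phi"
  then show "Aint (Tcal t phi) t = exp (- 2 * phi t) * Aint phi t"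
    unfolding Tcal_def using Aint_TTz_endpoint assms by simp
next
  fix phi :: "real \<Rightarrow> real" and s assume "continuous_on {0..t} phi" "s \<in> {0..t}"
  then show "Zf (Tcal t phi) s = Zf phi s"
    unfolding Tcal_def using Zf_TTz assms by blast
next
  fix z and phi :: "real \<Rightarrow> real" and s assume "continuous_on {0..t} phi" "s \<in> {0..t}"
  then show "(Tcal t \<circ> TTz t z \<circ> Tcal t \<circ> TTz t z) phi s = phi s"
    using Tcal_TTz_Tcal_TTz assms by simp
next
  fix phi :: "real \<Rightarrow> real" and s assume "continuous_on {0..t} phi" "s \<in> {0..t}"
  then show "(Tcal t \<circ> Tcal t) phi s = phi s"
    using Tcal_Tcal assms by simp
next
  fix z and phi :: "real \<Rightarrow> real" and s assume "continuous_on {0..t} phi" "s \<in> {0..t}"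
  then show "(Tcal t \<circ> TTz t z) phi s = TTz t (2 * phi t - z) phi s"
    using Tcal_TTz assms by simp
next
  fix phi :: "real \<Rightarrow> real" and s assume "continuous_on {0..t} phi" "phi 0 = 0" "s \<in> {0..t}"
  then show "(Rrev t \<circ> Tcal t) phi s = (Tcal t \<circ> Rrev t) phi s"
    using Rrev_Tcal assms by simp
qed

end
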